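(* Let $f\in L^\infty(\mathbb T^d)$ be a probability density, let $X_1,\dots,X_{2n}$ be i.i.d. with density $f$, split as $\mathcal S^1=(X_1,\dots,X_n)$ and $\mathcal S^2=(X_{n+1},\dots,X_{2n})$, and let $\tilde f_n$ be an estimator of $f$ based on $\mathcal S^1$. For $j\ge0$ and $\delta\in\mathbb R$ let $$U_{n,j}(\tilde f_n)=\frac{2}{n(n-1)}\sum_{i<i',\ i,i'\in\mathcal S^2}\sum_{l<j}2^{-2l}(l\vee1)^{2\delta}\sum_{k=0}^{2^{ld}-1}\big(\psi_{lk}(X_i)-\langle\psi_{lk},\tilde f_n\rangle\big)\big(\psi_{lk}(X_{i'})-\langle\psi_{lk},\tilde f_n\rangle\big).$$ Then $$\mathrm{Var}^{(2)}(U_{n,j}(\tilde f_n))\le\frac{4\|f\|_\infty}{n}\Big(\max_{l\ge-1}4^{-l}(1\vee l)^{2\delta}\Big)\|K_j(f-\tilde f_n)\|_{H^{-1,\delta}}^2+\frac{2\|f\|_\infty^2}{n(n-1)}\sum_{l\le j-1}2^{l(d-4)}(l\vee1)^{4\delta}.$$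
   Context: $\mathbb T^d$ is the $d$-dimensional torus; $\{\phi\equiv1,\psi_{lk}:l\ge0,0\le k<2^{ld}\}$ is an $S$-regular periodised tensor-product Daubechies wavelet orthonormal basis of $L_2(\mathbb T^d)$; $\langle f,g\rangle=\int fg$, $\langle f,\psi_{l\cdot}\rangle=(\langle f,\psi_{lk}\rangle)_k$. $\mathrm{Var}^{(2)}$ denotes the variance with respect to the subsample $\mathcal S^2$ only (conditionally on $\mathcal S^1$). $K_j(g)=\langle g,1\rangle+\sum_{l<j}\sum_{k}\langle g,\psi_{lk}\rangle\psi_{lk}$. $\|g\|_{H^{-1,\delta}}=|\langle g,1\rangle|+\big(\sum_{l\ge0}2^{-2l}\max(l,1)^{2\delta}\|\langle g,\psi_{l\cdot}\rangle\|_{\ell_2}^2\big)^{1/2}$. Sums over $l$ range over integers $l\ge0$ unless indicated. *)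

theory Defs
  imports "HOL-Probability.Probability"
begin

text \<open>The torus T^d, represented by its fundamental domain [0,1)^d with Lebesgue measure.\<close>
definition torus_set :: "(real ^ 'd) set" where
  "torus_set = {x. \<forall>i. 0 \<le> x $ i \<and> x $ i < 1}"

definition torus :: "(real ^ 'd) measure" where
  "torus = restrict_space lborel torus_set"

definition inner_T :: "(real ^ 'd \<Rightarrow> real) \<Rightarrow> (real ^ 'd \<Rightarrow> real) \<Rightarrow> real" where
  "inner_T g h = (LINT x|torus. g x * h x)"

definition nwav :: "'d itself \<Rightarrow> nat \<Rightarrow> nat" where
  "nwav _ l = 2 ^ (l * CARD('d))"

definition L2_T :: "(real ^ 'd \<Rightarrow> real) set" where
  "L2_T = {g. g \<in> borel_measurable torus \<and> integrable torus (\<lambda>x. (g x)\<^sup>2)}"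

text \<open>{1} \<union> {psi l k : l \<ge> 0, k < 2^(ld)} is an orthonormal basis of L2(T^d)
  consisting of bounded measurable functions (completeness stated via Parseval).\<close>
definition wavelet_ONB :: "(nat \<Rightarrow> nat \<Rightarrow> real ^ 'd \<Rightarrow> real) \<Rightarrow> bool" where
  "wavelet_ONB psi \<longleftrightarrow>
     (\<forall>l k. k < nwav TYPE('d) l \<longrightarrow>
        psi l k \<in> borel_measurable torus \<and>
        (\<exists>B. \<forall>x\<in>torus_set. \<bar>psi l k x\<bar> \<le> B) \<and>
        inner_T (psi l k) (\<lambda>_. 1) = 0) \<and>
     (\<forall>l k l' k'. k < nwav TYPE('d) l \<longrightarrow> k' < nwav TYPE('d) l' \<longrightarrow>
        inner_T (psi l k) (psi l' k') = (if l = l' \<and> k = k' then 1 else 0)) \<and>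
     (\<forall>g\<in>L2_T. (\<lambda>l. \<Sum>k<nwav TYPE('d) l. (inner_T g (psi l k))\<^sup>2) sums
        (inner_T g g - (inner_T g (\<lambda>_. 1))\<^sup>2))"

definition Kproj :: "(nat \<Rightarrow> nat \<Rightarrow> real ^ 'd \<Rightarrow> real) \<Rightarrow> nat \<Rightarrow> (real ^ 'd \<Rightarrow> real) \<Rightarrow> real ^ 'd \<Rightarrow> real" where
  "Kproj psi j g = (\<lambda>x. inner_T g (\<lambda>_. 1) +
      (\<Sum>l<j. \<Sum>k<nwav TYPE('d) l. inner_T g (psi l k) * psi l k x))"

text \<open>The H^{-1,delta} norm; the l2 norm of the level-l coefficients is squared.\<close>
definition Hnorm :: "(nat \<Rightarrow> nat \<Rightarrow> real ^ 'd \<Rightarrow> real) \<Rightarrow> real \<Rightarrow> (real ^ 'd \<Rightarrow> real) \<Rightarrow> real" where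
  "Hnorm psi \<delta> g = \<bar>inner_T g (\<lambda>_. 1)\<bar> +
     sqrt (\<Sum>l. 2 powr (- 2 * real l) * real (max l 1) powr (2 * \<delta>) *
                 (\<Sum>k<nwav TYPE('d) l. (inner_T g (psi l k))\<^sup>2))"

text \<open>The U-statistic U_{n,j}(g) computed from the second subsample xs 0, ..., xs (n-1).\<close>
definition Ustat :: "(nat \<Rightarrow> nat \<Rightarrow> real ^ 'd \<Rightarrow> real) \<Rightarrow> real \<Rightarrow> nat \<Rightarrow> nat \<Rightarrow>
    (real ^ 'd \<Rightarrow> real) \<Rightarrow> (nat \<Rightarrow> real ^ 'd) \<Rightarrow> real" where
  "Ustat psi \<delta> n j g xs = 2 / (real n * (real n - 1)) *
     (\<Sum>i'<n. \<Sum>i<i'. \<Sum>l<j. 2 powr (- 2 * real l) * real (max l 1) powr (2 * \<delta>) *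
        (\<Sum>k<nwav TYPE('d) l. (psi l k (xs i) - inner_T (psi l k) g) *
                                 (psi l k (xs i') - inner_T (psi l k) g)))"

definition Linf_norm :: "(real ^ 'd \<Rightarrow> real) \<Rightarrow> real" where
  "Linf_norm f = real_of_ereal (esssup torus (\<lambda>x. ereal \<bar>f x\<bar>))"

definition sample_law :: "(real ^ 'd \<Rightarrow> real) \<Rightarrow> nat \<Rightarrow> (nat \<Rightarrow> real ^ 'd) measure" where
  "sample_law f n = PiM {..<n} (\<lambda>_. density torus (\<lambda>x. ennreal (f x)))"

end

theory Submission
  imports Defs "HOL-Real_Asymp.Real_Asymp"
begin

text \<open>
  Write u_p = psi_p - E psi_p(X) and a_p = <f - g, psi_p> for the wavelets p = (l, k) with l < j,
  and w_p for the level weights. The kernel of the U-statistic splits (Hoeffding decomposition)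
  into a constant, a linear part (n - 1) sum_p w_p a_p sum_i u_p(X_i) and a degenerate part
  sum_p w_p sum_(i < i') u_p(X_i) u_p(X_i'). The two random parts are centred and uncorrelated,
  which gives the exact variance
    2 / (n (n - 1)) sum_(p,q) w_p w_q C_pq^2 + 4 / n sum_(p,q) w_p a_p w_q a_q C_pq,
  where C is the covariance matrix of the psi_p under f. The second sum is the variance of
  sum_p w_p a_p psi_p(X), hence at most ||f||_oo sum_p (w_p a_p)^2 by orthonormality. For the
  first, Bessel's inequality applied to f u_p bounds every row sum sum_q C_pq^2 by ||f||_oo^2,
  and w_p w_q <= (w_p^2 + w_q^2) / 2 then gives the bound ||f||_oo^2 sum_p w_p^2.
\<close>

definition ess_bounded :: "'a measure \<Rightarrow> ('a \<Rightarrow> real) \<Rightarrow> bool" where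
  "ess_bounded M h \<longleftrightarrow> h \<in> borel_measurable M \<and> (\<exists>B. AE x in M. \<bar>h x\<bar> \<le> B)"

lemma ess_bounded_const [simp]: "ess_bounded M (\<lambda>_. c)"
  unfolding ess_bounded_def by (intro conjI exI[of _ "\<bar>c\<bar>"]) auto

lemma ess_bounded_add:
  assumes "ess_bounded M f" "ess_bounded M g"
  shows "ess_bounded M (\<lambda>x. f x + g x)"
proof -
  obtain A B where "AE x in M. \<bar>f x\<bar> \<le> A" "AE x in M. \<bar>g x\<bar> \<le> B"
    using assms unfolding ess_bounded_def by blast
  then have "AE x in M. \<bar>f x + g x\<bar> \<le> A + B" by eventually_elim linarith
  moreover have "(\<lambda>x. f x + g x) \<in> borel_measurable M"
    using assms unfolding ess_bounded_def by (intro borel_measurable_add) auto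
  ultimately show ?thesis unfolding ess_bounded_def by blast
qed

lemma ess_bounded_mult:
  assumes "ess_bounded M f" "ess_bounded M g"
  shows "ess_bounded M (\<lambda>x. f x * g x)"
proof -
  obtain A B where "AE x in M. \<bar>f x\<bar> \<le> A" "AE x in M. \<bar>g x\<bar> \<le> B"
    using assms unfolding ess_bounded_def by blast
  then have "AE x in M. \<bar>f x * g x\<bar> \<le> A * B"
    by eventually_elim (simp add: abs_mult mult_mono')
  moreover have "(\<lambda>x. f x * g x) \<in> borel_measurable M"
    using assms unfolding ess_bounded_def by (intro borel_measurable_times) auto
  ultimately show ?thesis unfolding ess_bounded_def by blast
qed

lemma ess_bounded_diff:
  assumes "ess_bounded M f" "ess_bounded M g"
  shows "ess_bounded M (\<lambda>x. f x - g x)"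
  using ess_bounded_add[OF assms(1) ess_bounded_mult[OF ess_bounded_const[of M "-1"] assms(2)]]
  by simp

lemma ess_bounded_sum:
  "(\<And>p. p \<in> P \<Longrightarrow> ess_bounded M (h p)) \<Longrightarrow> ess_bounded M (\<lambda>x. \<Sum>p\<in>P. h p x)"
  by (induction P rule: infinite_finite_induct) (auto intro: ess_bounded_add)

lemma ess_bounded_integrable:
  assumes "finite_measure M" "ess_bounded M h"
  shows "integrable M h"
proof -
  obtain B where "h \<in> borel_measurable M" "AE x in M. norm (h x) \<le> B"
    using assms(2) unfolding ess_bounded_def by auto
  then show ?thesis by (intro finite_measure.integrable_const_bound[OF assms(1)])
qed

lemma integrable_ess_bounded_mult:
  assumes "ess_bounded M h" "integrable M g"
  shows "integrable M (\<lambda>x. h x * g x)"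
proof -
  obtain B where h: "h \<in> borel_measurable M" and B: "AE x in M. \<bar>h x\<bar> \<le> B"
    using assms(1) unfolding ess_bounded_def by auto
  show ?thesis
  proof (rule Bochner_Integration.integrable_bound)
    show "integrable M (\<lambda>x. B * g x)"
      using assms(2) by (rule integrable_mult_right)
    show "(\<lambda>x. h x * g x) \<in> borel_measurable M"
      using h borel_measurable_integrable[OF assms(2)] by (rule borel_measurable_times)
    show "AE x in M. norm (h x * g x) \<le> norm (B * g x)"
      using B
    proof eventually_elim
      case (elim x)
      then have "\<bar>h x\<bar> \<le> \<bar>B\<bar>" by linarith
      then show ?case by (simp add: abs_mult mult_right_mono)
    qed
  qed
qed

lemma ess_bounded_density:
  assumes "ess_bounded M h" "f \<in> borel_measurable M"
  shows "ess_bounded (density M f) h"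
proof -
  obtain B where h: "h \<in> borel_measurable M" and B: "AE x in M. \<bar>h x\<bar> \<le> B"
    using assms(1) unfolding ess_bounded_def by auto
  have "AE x in density M f. \<bar>h x\<bar> \<le> B"
    unfolding AE_density[OF assms(2)] using B by eventually_elim simp
  moreover have "h \<in> borel_measurable (density M f)"
    using h by simp
  ultimately show ?thesis unfolding ess_bounded_def by blast
qed

lemma integral_sum_ess_bounded:
  assumes "finite_measure M" "\<And>a. a \<in> I \<Longrightarrow> ess_bounded M (F a)"
  shows "(\<integral>x. (\<Sum>a\<in>I. F a x) \<partial>M) = (\<Sum>a\<in>I. \<integral>x. F a x \<partial>M)"
  using assms by (intro Bochner_Integration.integral_sum ess_bounded_integrable)

lemma integral_double_sum_ess_bounded:
  assumes "finite_measure M" "\<And>a b. a \<in> A \<Longrightarrow> b \<in> B a \<Longrightarrow> ess_bounded M (F a b)"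
  shows "(\<integral>x. (\<Sum>a\<in>A. \<Sum>b\<in>B a. F a b x) \<partial>M) = (\<Sum>a\<in>A. \<Sum>b\<in>B a. \<integral>x. F a b x \<partial>M)"
  using assms by (simp add: integral_sum_ess_bounded ess_bounded_sum)

lemma prod_list_split_coords:
  fixes xs :: "nat \<Rightarrow> 'a" and fs :: "(nat \<times> ('a \<Rightarrow> 'b::comm_monoid_mult)) list"
  assumes "\<And>i h. (i, h) \<in> set fs \<Longrightarrow> i < n"
  shows "(\<Prod>(i, h)\<leftarrow>fs. h (xs i)) = (\<Prod>t<n. \<Prod>(i, h)\<leftarrow>fs. if i = t then h (xs t) else 1)"
  using assms
proof (induction fs)
  case (Cons ih fs)
  obtain i h where [simp]: "ih = (i, h)" by fastforce
  have "i < n" using Cons.prems[of i h] by simp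
  moreover have "(\<Prod>(i, h)\<leftarrow>fs. h (xs i)) = (\<Prod>t<n. \<Prod>(i, h)\<leftarrow>fs. if i = t then h (xs t) else 1)"
    by (rule Cons.IH) (use Cons.prems in auto)
  ultimately show ?case by (simp add: prod.distrib)
qed simp

lemma sum_lessThan_real: "(\<Sum>i<n. real i) = real n * (real n - 1) / 2"
  by (induction n) (simp_all add: algebra_simps add_divide_distrib)

lemma sum_pairs_delta:
  fixes X :: real and i i' n :: nat
  assumes "i < i'" "i' < n"
  shows "(\<Sum>t'<n. \<Sum>t<t'. if t = i \<and> t' = i' then X else 0) = X"
proof -
  have "(\<Sum>t'<n. \<Sum>t<t'. if t = i \<and> t' = i' then X else 0) =
      (\<Sum>t'<n. if t' = i' then (\<Sum>t<t'. if t = i then X else 0) else 0)"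
    by (intro sum.cong refl) auto
  then show ?thesis
    using assms by simp
qed

lemma U_statistic_scaling:
  assumes "2 \<le> n"
  shows "(2 / (real n * (real n - 1)))\<^sup>2 * (real n * (real n - 1) / 2) = 2 / (real n * (real n - 1))"
    and "(2 / (real n * (real n - 1)))\<^sup>2 * (real n - 1)\<^sup>2 * real n = 4 / real n"
proof -
  have "(2 / (a * m))\<^sup>2 * (a * m / 2) = 2 / (a * m)" "(2 / (a * m))\<^sup>2 * m\<^sup>2 * a = 4 / a"
    if "a \<noteq> 0" "m \<noteq> 0" for a m :: real
    using that by (simp_all add: power2_eq_square field_simps)
  moreover have "real n \<noteq> 0" "real n - 1 \<noteq> 0" using assms by auto
  ultimately show "(2 / (real n * (real n - 1)))\<^sup>2 * (real n * (real n - 1) / 2) =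
      2 / (real n * (real n - 1))"
    and "(2 / (real n * (real n - 1)))\<^sup>2 * (real n - 1)\<^sup>2 * real n = 4 / real n"
    by blast+
qed

lemma sum_weighted_square_le:
  fixes C :: "'i \<Rightarrow> 'i \<Rightarrow> real"
  assumes "\<And>p q. C p q = C q p" "\<And>p. p \<in> J \<Longrightarrow> (\<Sum>q\<in>J. (C p q)\<^sup>2) \<le> B"
  shows "(\<Sum>p\<in>J. \<Sum>q\<in>J. w p * w q * (C p q)\<^sup>2) \<le> B * (\<Sum>p\<in>J. (w p)\<^sup>2)"
proof -
  have "(\<Sum>p\<in>J. \<Sum>q\<in>J. w p * w q * (C p q)\<^sup>2) \<le>
      (\<Sum>p\<in>J. \<Sum>q\<in>J. (w p)\<^sup>2 * (C p q)\<^sup>2 / 2 + (w q)\<^sup>2 * (C q p)\<^sup>2 / 2)"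
  proof (intro sum_mono)
    fix p q
    have "0 \<le> (w p - w q)\<^sup>2 * (C p q)\<^sup>2" by simp
    then show "w p * w q * (C p q)\<^sup>2 \<le> (w p)\<^sup>2 * (C p q)\<^sup>2 / 2 + (w q)\<^sup>2 * (C q p)\<^sup>2 / 2"
      by (simp add: assms(1)[of q p] power2_eq_square algebra_simps)
  qed
  also have "\<dots> = (\<Sum>p\<in>J. (w p)\<^sup>2 * (\<Sum>q\<in>J. (C p q)\<^sup>2))"
  proof -
    have "(\<Sum>p\<in>J. \<Sum>q\<in>J. (w q)\<^sup>2 * (C q p)\<^sup>2) = (\<Sum>p\<in>J. \<Sum>q\<in>J. (w p)\<^sup>2 * (C p q)\<^sup>2)"
      by (rule sum.swap)
    then show ?thesis
      by (simp add: sum.distrib sum_distrib_left sum_divide_distrib[symmetric])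
  qed
  also have "\<dots> \<le> (\<Sum>p\<in>J. (w p)\<^sup>2 * B)"
    by (intro sum_mono mult_left_mono assms(2)) auto
  also have "\<dots> = B * (\<Sum>p\<in>J. (w p)\<^sup>2)"
    by (simp add: sum_distrib_left mult.commute)
  finally show ?thesis .
qed

section \<open>Moments of i.i.d. samples\<close>

definition sample_sum :: "nat \<Rightarrow> ('a \<Rightarrow> real) \<Rightarrow> (nat \<Rightarrow> 'a) \<Rightarrow> real" where
  "sample_sum n u xs = (\<Sum>i<n. u (xs i))"

definition pair_sum :: "nat \<Rightarrow> ('a \<Rightarrow> real) \<Rightarrow> (nat \<Rightarrow> 'a) \<Rightarrow> real" where
  "pair_sum n u xs = (\<Sum>i'<n. \<Sum>i<i'. u (xs i) * u (xs i'))"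

lemma sum_pairs_shift:
  "(\<Sum>i'<n. \<Sum>i<i'. (u (xs i) + b) * (u (xs i') + b)) =
    pair_sum n u xs + (real n - 1) * b * sample_sum n u xs + real n * (real n - 1) / 2 * b\<^sup>2"
  unfolding pair_sum_def sample_sum_def
proof (induction n)
  case (Suc n)
  have "(\<Sum>i<n. (u (xs i) + b) * (u (xs n) + b)) =
      (\<Sum>i<n. u (xs i) * u (xs n)) + b * (\<Sum>i<n. u (xs i)) + real n * b * u (xs n) + real n * b\<^sup>2"
    by (simp add: algebra_simps sum.distrib sum_distrib_left sum_distrib_right power2_eq_square)
  with Suc show ?case
    by (simp add: field_simps power2_eq_square)
qed simp

lemma U_kernel_decomposition:
  "(\<Sum>i'<n. \<Sum>i<i'. \<Sum>p\<in>J. w p * ((u p (xs i) + b p) * (u p (xs i') + b p))) =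
    (\<Sum>p\<in>J. w p * (pair_sum n (u p) xs + (real n - 1) * b p * sample_sum n (u p) xs)) +
    real n * (real n - 1) / 2 * (\<Sum>p\<in>J. w p * (b p)\<^sup>2)"
proof -
  have "(\<Sum>i'<n. \<Sum>i<i'. \<Sum>p\<in>J. w p * ((u p (xs i) + b p) * (u p (xs i') + b p))) =
      (\<Sum>p\<in>J. w p * (\<Sum>i'<n. \<Sum>i<i'. (u p (xs i) + b p) * (u p (xs i') + b p)))"
    by (simp add: sum_distrib_left sum.swap[of _ J])
  also have "\<dots> = (\<Sum>p\<in>J. w p * (pair_sum n (u p) xs + (real n - 1) * b p * sample_sum n (u p) xs +
      real n * (real n - 1) / 2 * (b p)\<^sup>2))"
    by (simp only: sum_pairs_shift)
  finally show ?thesis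
    by (simp add: distrib_left sum.distrib sum_distrib_left mult_ac)
qed

context prob_space
begin

abbreviation iid_sample :: "nat \<Rightarrow> (nat \<Rightarrow> 'a) measure" where
  "iid_sample n \<equiv> PiM {..<n} (\<lambda>_. M)"

lemma prob_space_iid_sample: "prob_space (iid_sample n)"
  by (rule prob_space_PiM) (rule prob_space_axioms)

lemma finite_measure_iid_sample: "finite_measure (iid_sample n)"
  using prob_space_iid_sample unfolding prob_space_def by blast

lemma ess_bounded_component:
  assumes "ess_bounded M h" "i < n"
  shows "ess_bounded (iid_sample n) (\<lambda>xs. h (xs i))"
proof -
  obtain B where h: "h \<in> borel_measurable M" and B: "AE x in M. \<bar>h x\<bar> \<le> B"
    using assms(1) unfolding ess_bounded_def by auto
  have "AE xs in iid_sample n. \<bar>h (xs i)\<bar> \<le> B"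
    using assms(2) B by (intro AE_PiM_component) (auto simp: prob_space_axioms)
  moreover have "(\<lambda>xs. h (xs i)) \<in> borel_measurable (iid_sample n)"
    using assms(2)
    by (intro measurable_compose[OF measurable_component_singleton[of i "{..<n}" "\<lambda>_. M"] h])
      auto
  ultimately show ?thesis unfolding ess_bounded_def by blast
qed

lemma integral_iid_sample_component:
  fixes h :: "'a \<Rightarrow> real"
  assumes "i < n" "h \<in> borel_measurable M"
  shows "(\<integral>xs. h (xs i) \<partial>iid_sample n) = expectation h"
proof -
  have "expectation h = integral\<^sup>L (distr (iid_sample n) M (\<lambda>xs. xs i)) h"
    using assms(1) distr_PiM_component[of "{..<n}" "\<lambda>_. M" i] by (simp add: prob_space_axioms)
  also have "\<dots> = (\<integral>xs. h (xs i) \<partial>iid_sample n)"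
  proof (rule integral_distr[OF _ assms(2)])
    show "(\<lambda>xs. xs i) \<in> iid_sample n \<rightarrow>\<^sub>M M"
      using measurable_component_singleton[of i "{..<n}" "\<lambda>_. M"] assms(1) by simp
  qed
  finally show ?thesis by simp
qed

lemma integral_iid_sample_prod_list:
  assumes fs: "\<And>i h. (i, h) \<in> set fs \<Longrightarrow> i < n \<and> ess_bounded M h"
  shows "(\<integral>xs. (\<Prod>(i, h)\<leftarrow>fs. h (xs i)) \<partial>iid_sample n) =
    (\<Prod>t<n. expectation (\<lambda>y. \<Prod>(i, h)\<leftarrow>fs. if i = t then h y else 1))"
proof -
  interpret product_sigma_finite "\<lambda>_::nat. M"
    by (simp add: product_sigma_finite_def sigma_finite_measure_axioms)
  define G where "G t y = (\<Prod>(i, h)\<leftarrow>fs. if i = t then h y else 1)" for t y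
  have "ess_bounded M (\<lambda>y. \<Prod>(i, h)\<leftarrow>fs'. if i = t then h y else 1)"
    if "set fs' \<subseteq> set fs" for fs' t
    using that
  proof (induction fs')
    case (Cons ih fs')
    obtain i h where [simp]: "ih = (i, h)" by fastforce
    have "ess_bounded M (\<lambda>y. if i = t then h y else 1)"
      using fs[of i h] Cons.prems by (cases "i = t") auto
    with Cons show ?case by (auto intro: ess_bounded_mult)
  qed simp
  then have G_integrable: "integrable M (G t)" for t
    unfolding G_def[abs_def] by (intro ess_bounded_integrable finite_measure_axioms) auto
  have "(\<integral>xs. (\<Prod>(i, h)\<leftarrow>fs. h (xs i)) \<partial>iid_sample n) = (\<integral>xs. (\<Prod>t<n. G t (xs t)) \<partial>iid_sample n)"
    unfolding G_def using fs by (intro Bochner_Integration.integral_cong refl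
        prod_list_split_coords) auto
  also have "\<dots> = (\<Prod>t<n. expectation (G t))"
    by (intro product_integral_prod G_integrable) simp
  finally show ?thesis
    unfolding G_def .
qed

lemma integral_iid_sample_centered_factor:
  assumes "i < n" "ess_bounded M h" "expectation h = 0"
    and fs: "\<And>t k. (t, k) \<in> set fs \<Longrightarrow> t < n \<and> t \<noteq> i \<and> ess_bounded M k"
  shows "(\<integral>xs. h (xs i) * (\<Prod>(t, k)\<leftarrow>fs. k (xs t)) \<partial>iid_sample n) = 0"
proof -
  have "(\<Prod>(t, k)\<leftarrow>fs. if t = i then k y else 1) = (\<Prod>_\<leftarrow>fs. 1)" for y
    using fs by (intro arg_cong[where f = prod_list] map_cong) auto
  then have "expectation (\<lambda>y. \<Prod>(t, k)\<leftarrow>(i, h) # fs. if t = i then k y else 1) = 0"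
    using assms(3) by simp
  then have "(\<Prod>s<n. expectation (\<lambda>y. \<Prod>(t, k)\<leftarrow>(i, h) # fs. if t = s then k y else 1)) = 0"
    using assms(1) by (intro prod_zero bexI[of _ i]) auto
  moreover have "(\<integral>xs. (\<Prod>(t, k)\<leftarrow>(i, h) # fs. k (xs t)) \<partial>iid_sample n) =
      (\<Prod>s<n. expectation (\<lambda>y. \<Prod>(t, k)\<leftarrow>(i, h) # fs. if t = s then k y else 1))"
    using assms by (intro integral_iid_sample_prod_list) auto
  ultimately show ?thesis by simp
qed

lemma integral_iid_sample_independent:
  assumes "i < n" "t < n" "i \<noteq> t" "ess_bounded M h" "ess_bounded M k"
  shows "(\<integral>xs. h (xs i) * k (xs t) \<partial>iid_sample n) = expectation h * expectation k"
proof -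
  let ?F = "\<lambda>s. expectation (\<lambda>y. \<Prod>(j, g)\<leftarrow>[(i, h), (t, k)]. if j = s then g y else 1)"
  have "(\<integral>xs. h (xs i) * k (xs t) \<partial>iid_sample n) = (\<Prod>s<n. ?F s)"
    using integral_iid_sample_prod_list[of "[(i, h), (t, k)]" n] assms(1,2,4,5) by fastforce
  also have "\<dots> = (\<Prod>s\<in>{i, t}. ?F s)"
    using assms(1,2) by (intro prod.mono_neutral_right) (auto simp: prob_space)
  also have "\<dots> = expectation h * expectation k"
    using assms(3) by simp
  finally show ?thesis .
qed

lemma integral_iid_sample_three_centered:
  assumes "ess_bounded M u" "ess_bounded M u'" "ess_bounded M v"
    and "expectation u = 0" "expectation u' = 0"
    and "i < i'" "i' < n" "t < n"
  shows "(\<integral>xs. u (xs i) * u' (xs i') * v (xs t) \<partial>iid_sample n) = 0"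
proof (cases "t = i")
  case True
  have "(\<integral>xs. u (xs i) * u' (xs i') * v (xs t) \<partial>iid_sample n) =
      (\<integral>xs. u' (xs i') * (\<Prod>(s, k)\<leftarrow>[(i, u), (t, v)]. k (xs s)) \<partial>iid_sample n)"
    by (simp add: mult_ac)
  also have "\<dots> = 0"
    using assms True by (intro integral_iid_sample_centered_factor) auto
  finally show ?thesis .
next
  case False
  have "(\<integral>xs. u (xs i) * u' (xs i') * v (xs t) \<partial>iid_sample n) =
      (\<integral>xs. u (xs i) * (\<Prod>(s, k)\<leftarrow>[(i', u'), (t, v)]. k (xs s)) \<partial>iid_sample n)"
    by (simp add: mult_ac)
  also have "\<dots> = 0"
    using assms False by (intro integral_iid_sample_centered_factor) auto
  finally show ?thesis .
qed

lemma integral_iid_sample_four_centered: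
  assumes "ess_bounded M u" "ess_bounded M u'" "ess_bounded M v" "ess_bounded M v'"
    and "expectation u = 0" "expectation u' = 0" "expectation v = 0"
    and "i < i'" "i' < n" "t < t'" "t' < n"
  shows "(\<integral>xs. u (xs i) * u' (xs i') * (v (xs t) * v' (xs t')) \<partial>iid_sample n) =
    (if t = i \<and> t' = i' then expectation (\<lambda>y. u y * v y) * expectation (\<lambda>y. u' y * v' y) else 0)"
proof -
  \<comment> \<open>Unless the two pairs coincide, some index occurs once and its centred factor vanishes.\<close>
  consider "i = t" "i' = t'" | "i \<noteq> t" "i \<noteq> t'" | "i = t" "i' \<noteq> t'" | "i = t'"
    by blast
  then show ?thesis
  proof cases
    case 1
    have "(\<integral>xs. u (xs i) * u' (xs i') * (v (xs t) * v' (xs t')) \<partial>iid_sample n) =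
        (\<integral>xs. (u (xs i) * v (xs i)) * (u' (xs i') * v' (xs i')) \<partial>iid_sample n)"
      using 1 by (simp add: mult_ac)
    also have "\<dots> = expectation (\<lambda>y. u y * v y) * expectation (\<lambda>y. u' y * v' y)"
      using assms by (intro integral_iid_sample_independent ess_bounded_mult) auto
    finally show ?thesis using 1 by simp
  next
    case 2
    have "(\<integral>xs. u (xs i) * u' (xs i') * (v (xs t) * v' (xs t')) \<partial>iid_sample n) =
        (\<integral>xs. u (xs i) * (\<Prod>(s, k)\<leftarrow>[(i', u'), (t, v), (t', v')]. k (xs s)) \<partial>iid_sample n)"
      by (simp add: mult_ac)
    also have "\<dots> = 0"
      using assms 2 by (intro integral_iid_sample_centered_factor) auto
    finally show ?thesis using 2 by simp
  next
    case 3
    have "(\<integral>xs. u (xs i) * u' (xs i') * (v (xs t) * v' (xs t')) \<partial>iid_sample n) =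
        (\<integral>xs. u' (xs i') * (\<Prod>(s, k)\<leftarrow>[(i, u), (t, v), (t', v')]. k (xs s)) \<partial>iid_sample n)"
      by (simp add: mult_ac)
    also have "\<dots> = 0"
      using assms 3 by (intro integral_iid_sample_centered_factor) auto
    finally show ?thesis using 3 by simp
  next
    case 4
    have "(\<integral>xs. u (xs i) * u' (xs i') * (v (xs t) * v' (xs t')) \<partial>iid_sample n) =
        (\<integral>xs. v (xs t) * (\<Prod>(s, k)\<leftarrow>[(i, u), (i', u'), (t', v')]. k (xs s)) \<partial>iid_sample n)"
      by (simp add: mult_ac)
    also have "\<dots> = 0"
      using assms 4 by (intro integral_iid_sample_centered_factor) auto
    finally show ?thesis using 4 assms by simp
  qed
qed

lemma integral_sample_sum:
  assumes "ess_bounded M u" "expectation u = 0"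
  shows "(\<integral>xs. sample_sum n u xs \<partial>iid_sample n) = 0"
proof -
  have "(\<integral>xs. sample_sum n u xs \<partial>iid_sample n) = (\<Sum>i<n. \<integral>xs. u (xs i) \<partial>iid_sample n)"
    unfolding sample_sum_def using assms(1) by (intro integral_sum_ess_bounded
        finite_measure_iid_sample ess_bounded_component) auto
  also have "\<dots> = 0"
    using assms unfolding ess_bounded_def by (simp add: integral_iid_sample_component)
  finally show ?thesis .
qed

lemma integral_pair_sum:
  assumes "ess_bounded M u" "expectation u = 0"
  shows "(\<integral>xs. pair_sum n u xs \<partial>iid_sample n) = 0"
proof -
  have "(\<integral>xs. pair_sum n u xs \<partial>iid_sample n) =
      (\<Sum>i'<n. \<Sum>i<i'. \<integral>xs. u (xs i) * u (xs i') \<partial>iid_sample n)"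
    unfolding pair_sum_def using assms
    by (intro integral_double_sum_ess_bounded finite_measure_iid_sample ess_bounded_mult
        ess_bounded_component) auto
  also have "\<dots> = 0"
    using assms by (intro sum.neutral ballI) (simp add: integral_iid_sample_independent)
  finally show ?thesis .
qed

lemma integral_sample_sum_mult:
  assumes "ess_bounded M u" "ess_bounded M v" "expectation u = 0" "expectation v = 0"
  shows "(\<integral>xs. sample_sum n u xs * sample_sum n v xs \<partial>iid_sample n) =
    real n * expectation (\<lambda>y. u y * v y)"
proof -
  have uv: "(\<lambda>y. u y * v y) \<in> borel_measurable M"
    using ess_bounded_mult[OF assms(1,2)] unfolding ess_bounded_def by blast
  have "(\<integral>xs. sample_sum n u xs * sample_sum n v xs \<partial>iid_sample n) =
      (\<Sum>i<n. \<Sum>t<n. \<integral>xs. u (xs i) * v (xs t) \<partial>iid_sample n)"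
    unfolding sample_sum_def sum_product using assms
    by (intro integral_double_sum_ess_bounded finite_measure_iid_sample ess_bounded_mult
        ess_bounded_component) auto
  also have "\<dots> = (\<Sum>i<n. \<Sum>t<n. if i = t then expectation (\<lambda>y. u y * v y) else 0)"
  proof (intro sum.cong refl)
    fix i t assume "i \<in> {..<n}" "t \<in> {..<n}"
    then show "(\<integral>xs. u (xs i) * v (xs t) \<partial>iid_sample n) =
        (if i = t then expectation (\<lambda>y. u y * v y) else 0)"
      using assms integral_iid_sample_component[OF _ uv, of t n]
      by (auto simp: integral_iid_sample_independent)
  qed
  finally show ?thesis by simp
qed

lemma integral_pair_sum_mult_sample_sum:
  assumes "ess_bounded M u" "ess_bounded M v" "expectation u = 0" "expectation v = 0"
  shows "(\<integral>xs. pair_sum n u xs * sample_sum n v xs \<partial>iid_sample n) = 0"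
proof -
  have "(\<integral>xs. pair_sum n u xs * sample_sum n v xs \<partial>iid_sample n) =
      (\<Sum>i'<n. \<Sum>i<i'. \<integral>xs. (\<Sum>t<n. u (xs i) * u (xs i') * v (xs t)) \<partial>iid_sample n)"
    unfolding pair_sum_def sum_distrib_right unfolding sample_sum_def sum_distrib_left using assms
    by (intro integral_double_sum_ess_bounded finite_measure_iid_sample ess_bounded_sum
        ess_bounded_mult ess_bounded_component) auto
  also have "\<dots> = (\<Sum>i'<n. \<Sum>i<i'. \<Sum>t<n. \<integral>xs. u (xs i) * u (xs i') * v (xs t) \<partial>iid_sample n)"
    using assms
    by (intro sum.cong refl integral_sum_ess_bounded finite_measure_iid_sample ess_bounded_mult
        ess_bounded_component) auto
  also have "\<dots> = 0"
    using assms by (intro sum.neutral ballI) (simp add: integral_iid_sample_three_centered)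
  finally show ?thesis .
qed

lemma integral_pair_sum_mult:
  assumes "ess_bounded M u" "ess_bounded M v" "expectation u = 0" "expectation v = 0"
  shows "(\<integral>xs. pair_sum n u xs * pair_sum n v xs \<partial>iid_sample n) =
    real n * (real n - 1) / 2 * (expectation (\<lambda>y. u y * v y))\<^sup>2"
proof -
  let ?E = "expectation (\<lambda>y. u y * v y)"
  have "(\<integral>xs. pair_sum n u xs * pair_sum n v xs \<partial>iid_sample n) =
      (\<Sum>i'<n. \<Sum>i<i'. \<integral>xs. (\<Sum>t'<n. \<Sum>t<t'. u (xs i) * u (xs i') * (v (xs t) * v (xs t'))) \<partial>iid_sample n)"
    unfolding pair_sum_def[of n u] sum_distrib_right unfolding pair_sum_def sum_distrib_left using
        assms
    by (intro integral_double_sum_ess_bounded finite_measure_iid_sample ess_bounded_sum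
        ess_bounded_mult ess_bounded_component) auto
  also have "\<dots> = (\<Sum>i'<n. \<Sum>i<i'. \<Sum>t'<n. \<Sum>t<t'.
      \<integral>xs. u (xs i) * u (xs i') * (v (xs t) * v (xs t')) \<partial>iid_sample n)"
    using assms
    by (intro sum.cong refl integral_double_sum_ess_bounded finite_measure_iid_sample
        ess_bounded_mult ess_bounded_component) auto
  also have "\<dots> = (\<Sum>i'<n. \<Sum>i<i'. \<Sum>t'<n. \<Sum>t<t'. if t = i \<and> t' = i' then ?E\<^sup>2 else 0)"
    using assms by (intro sum.cong refl) (simp add: integral_iid_sample_four_centered
        power2_eq_square)
  also have "\<dots> = (\<Sum>i'<n. \<Sum>i<i'. ?E\<^sup>2)"
    by (intro sum.cong refl sum_pairs_delta) auto
  finally show ?thesis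
    by (simp add: sum_distrib_right[symmetric] sum_lessThan_real)
qed

lemma integral_hoeffding_parts_mult:
  assumes "ess_bounded M u" "ess_bounded M v" "expectation u = 0" "expectation v = 0"
  shows "(\<integral>xs. (pair_sum n u xs + \<beta> * sample_sum n u xs) *
      (pair_sum n v xs + \<gamma> * sample_sum n v xs) \<partial>iid_sample n) =
    real n * (real n - 1) / 2 * (expectation (\<lambda>y. u y * v y))\<^sup>2 +
    \<beta> * \<gamma> * (real n * expectation (\<lambda>y. u y * v y))"
proof -
  have bdd: "ess_bounded (iid_sample n) (pair_sum n u)" "ess_bounded (iid_sample n) (pair_sum n v)"
    "ess_bounded (iid_sample n) (sample_sum n u)" "ess_bounded (iid_sample n) (sample_sum n v)"
    unfolding pair_sum_def[abs_def] sample_sum_def[abs_def] using assms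
    by (intro ess_bounded_sum ess_bounded_mult ess_bounded_component; simp)+
  have int: "integrable (iid_sample n) (\<lambda>xs. F xs * G xs)"
    if "ess_bounded (iid_sample n) F" "ess_bounded (iid_sample n) G" for F G
    using that by (intro ess_bounded_integrable finite_measure_iid_sample ess_bounded_mult)
  have "(\<lambda>xs. (pair_sum n u xs + \<beta> * sample_sum n u xs) * (pair_sum n v xs + \<gamma> * sample_sum n v xs)) =
      (\<lambda>xs. pair_sum n u xs * pair_sum n v xs + \<gamma> * (pair_sum n u xs * sample_sum n v xs)
        + \<beta> * (pair_sum n v xs * sample_sum n u xs) + \<beta> * \<gamma> * (sample_sum n u xs * sample_sum n v xs))"
    by (auto simp: algebra_simps)
  then show ?thesis
    using assms int[OF bdd(1,2)] int[OF bdd(1,4)] int[OF bdd(2,3)] int[OF bdd(3,4)]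
    by (simp add: integral_pair_sum_mult integral_pair_sum_mult_sample_sum integral_sample_sum_mult)
qed

lemma integral_hoeffding_sum:
  assumes "\<And>p. p \<in> J \<Longrightarrow> ess_bounded M (u p)" "\<And>p. p \<in> J \<Longrightarrow> expectation (u p) = 0"
  shows "(\<integral>xs. (\<Sum>p\<in>J. w p * (pair_sum n (u p) xs + \<beta> p * sample_sum n (u p) xs)) \<partial>iid_sample n) = 0"
proof -
  have "ess_bounded (iid_sample n) (pair_sum n (u p))" "ess_bounded (iid_sample n) (sample_sum n (u p))"
    if "p \<in> J" for p
    unfolding pair_sum_def[abs_def] sample_sum_def[abs_def] using assms(1)[OF that]
    by (intro ess_bounded_sum ess_bounded_mult ess_bounded_component; simp)+
  then show ?thesis
    using assms
    by (simp add: integral_sum_ess_bounded ess_bounded_integrable finite_measure_iid_sample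
        ess_bounded_mult ess_bounded_add integral_pair_sum integral_sample_sum)
qed

lemma integral_hoeffding_sum_square:
  assumes "\<And>p. p \<in> J \<Longrightarrow> ess_bounded M (u p)" "\<And>p. p \<in> J \<Longrightarrow> expectation (u p) = 0"
  shows "(\<integral>xs. (\<Sum>p\<in>J. w p * (pair_sum n (u p) xs + \<beta> p * sample_sum n (u p) xs))\<^sup>2 \<partial>iid_sample n) =
    (\<Sum>p\<in>J. \<Sum>q\<in>J. w p * w q * (real n * (real n - 1) / 2 * (expectation (\<lambda>y. u p y * u q y))\<^sup>2 +
      \<beta> p * \<beta> q * (real n * expectation (\<lambda>y. u p y * u q y))))"
proof -
  let ?X = "\<lambda>p xs. pair_sum n (u p) xs + \<beta> p * sample_sum n (u p) xs"
  have "ess_bounded (iid_sample n) (?X p)" if "p \<in> J" for p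
    unfolding pair_sum_def sample_sum_def using assms(1)[OF that]
    by (intro ess_bounded_add ess_bounded_mult ess_bounded_sum ess_bounded_component
        ess_bounded_const; simp)
  then have "(\<integral>xs. (\<Sum>p\<in>J. w p * ?X p xs)\<^sup>2 \<partial>iid_sample n) =
      (\<Sum>p\<in>J. \<Sum>q\<in>J. \<integral>xs. w p * ?X p xs * (w q * ?X q xs) \<partial>iid_sample n)"
    unfolding power2_eq_square sum_product
    by (intro integral_double_sum_ess_bounded finite_measure_iid_sample ess_bounded_mult
        ess_bounded_const) auto
  also have "\<dots> = (\<Sum>p\<in>J. \<Sum>q\<in>J. w p * w q * (\<integral>xs. ?X p xs * ?X q xs \<partial>iid_sample n))"
    by (intro sum.cong refl) (simp add: mult_ac)
  finally show ?thesis
    using assms by (simp add: integral_hoeffding_parts_mult cong: sum.cong)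
qed

section \<open>Variance of a weighted U-statistic\<close>

definition covariance :: "('a \<Rightarrow> real) \<Rightarrow> ('a \<Rightarrow> real) \<Rightarrow> real" where
  "covariance X Y = expectation (\<lambda>x. (X x - expectation X) * (Y x - expectation Y))"

lemma covariance_commute: "covariance X Y = covariance Y X"
  unfolding covariance_def by (simp add: mult.commute)

lemma covariance_quadratic_form:
  assumes "finite J" "\<And>p. p \<in> J \<Longrightarrow> ess_bounded M (X p)"
  shows "(\<Sum>p\<in>J. \<Sum>q\<in>J. z p * z q * covariance (X p) (X q)) = variance (\<lambda>x. \<Sum>p\<in>J. z p * X p x)"
proof -
  have bdd: "ess_bounded M (\<lambda>x. X p x - expectation (X p))" if "p \<in> J" for p
    using assms(2)[OF that] by (intro ess_bounded_diff ess_bounded_const)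
  have "expectation (\<lambda>x. \<Sum>p\<in>J. z p * X p x) = (\<Sum>p\<in>J. z p * expectation (X p))"
    using assms(2) by (simp add: integral_sum_ess_bounded finite_measure_axioms ess_bounded_mult)
  then have "(\<lambda>x. ((\<Sum>p\<in>J. z p * X p x) - expectation (\<lambda>x. \<Sum>p\<in>J. z p * X p x))\<^sup>2) =
      (\<lambda>x. \<Sum>p\<in>J. \<Sum>q\<in>J. z p * (X p x - expectation (X p)) * (z q * (X q x - expectation (X q))))"
    by (simp add: power2_eq_square sum_product sum_subtractf[symmetric] right_diff_distrib)
  then have "variance (\<lambda>x. \<Sum>p\<in>J. z p * X p x) =
      (\<Sum>p\<in>J. \<Sum>q\<in>J. expectation (\<lambda>x. z p * (X p x - expectation (X p)) * (z q * (X q x - expectation (X q)))))"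
    using bdd by (simp add: integral_double_sum_ess_bounded finite_measure_axioms ess_bounded_mult)
  also have "\<dots> = (\<Sum>p\<in>J. \<Sum>q\<in>J. z p * z q * covariance (X p) (X q))"
    unfolding covariance_def by (intro sum.cong refl) (simp add: mult_ac)
  finally show ?thesis ..
qed

lemma variance_weighted_U_statistic:
  fixes \<phi> :: "'i \<Rightarrow> 'a \<Rightarrow> real" and w c :: "'i \<Rightarrow> real"
  assumes J: "finite J" and \<phi>: "\<And>p. p \<in> J \<Longrightarrow> ess_bounded M (\<phi> p)" and n: "2 \<le> n"
  defines "U \<equiv> \<lambda>xs. 2 / (real n * (real n - 1)) *
    (\<Sum>i'<n. \<Sum>i<i'. \<Sum>p\<in>J. w p * ((\<phi> p (xs i) - c p) * (\<phi> p (xs i') - c p)))"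
  shows "(\<integral>xs. (U xs - (\<integral>ys. U ys \<partial>iid_sample n))\<^sup>2 \<partial>iid_sample n) =
    2 / (real n * (real n - 1)) * (\<Sum>p\<in>J. \<Sum>q\<in>J. w p * w q * (covariance (\<phi> p) (\<phi> q))\<^sup>2) +
    4 / real n * (\<Sum>p\<in>J. \<Sum>q\<in>J. w p * (expectation (\<phi> p) - c p) *
      (w q * (expectation (\<phi> q) - c q)) * covariance (\<phi> p) (\<phi> q))"
proof -
  define u where "u p y = \<phi> p y - expectation (\<phi> p)" for p y
  define b where "b p = expectation (\<phi> p) - c p" for p
  define \<kappa> where "\<kappa> = 2 / (real n * (real n - 1))"
  define N where "N = real n * (real n - 1) / 2"
  define T where
    "T xs = (\<Sum>p\<in>J. w p * (pair_sum n (u p) xs + (real n - 1) * b p * sample_sum n (u p) xs))"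
    for xs
  define K where "K = N * (\<Sum>p\<in>J. w p * (b p)\<^sup>2)"
  have u_bdd: "ess_bounded M (u p)" if "p \<in> J" for p
    unfolding u_def[abs_def] using \<phi>[OF that] by (intro ess_bounded_diff ess_bounded_const)
  have u_mean: "expectation (u p) = 0" if "p \<in> J" for p
    using ess_bounded_integrable[OF finite_measure_axioms \<phi>[OF that]]
    by (simp add: u_def[abs_def] prob_space)
  have cov: "covariance (\<phi> p) (\<phi> q) = expectation (\<lambda>y. u p y * u q y)" for p q
    by (simp add: covariance_def u_def)
  have U_eq: "U xs = \<kappa> * (T xs + K)" for xs
  proof -
    have "\<phi> p y - c p = u p y + b p" for p y
      by (simp add: u_def b_def)
    then show ?thesis
      unfolding U_def \<kappa>_def T_def K_def N_def by (simp add: U_kernel_decomposition)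
  qed
  interpret S: prob_space "iid_sample n" by (rule prob_space_iid_sample)
  have "ess_bounded (iid_sample n) T"
    unfolding T_def pair_sum_def sample_sum_def using u_bdd
    by (intro ess_bounded_sum ess_bounded_add ess_bounded_mult ess_bounded_component
        ess_bounded_const; simp)
  moreover have "(\<integral>xs. T xs \<partial>iid_sample n) = 0"
    unfolding T_def by (intro integral_hoeffding_sum u_bdd u_mean)
  ultimately have "(\<integral>ys. U ys \<partial>iid_sample n) = \<kappa> * K"
    unfolding U_eq by (simp add: ess_bounded_integrable finite_measure_iid_sample S.prob_space)
  then have "(\<integral>xs. (U xs - (\<integral>ys. U ys \<partial>iid_sample n))\<^sup>2 \<partial>iid_sample n) = \<kappa>\<^sup>2 * (\<integral>xs. (T xs)\<^sup>2 \<partial>iid_sample n)"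
    by (simp add: U_eq algebra_simps power2_eq_square)
  also have "\<dots> = \<kappa>\<^sup>2 * (\<Sum>p\<in>J. \<Sum>q\<in>J. w p * w q * (N * (covariance (\<phi> p) (\<phi> q))\<^sup>2 +
      (real n - 1) * b p * ((real n - 1) * b q) * (real n * covariance (\<phi> p) (\<phi> q))))"
    unfolding T_def cov N_def by (simp add: integral_hoeffding_sum_square u_bdd u_mean)
  also have "\<dots> = \<kappa>\<^sup>2 * (\<Sum>p\<in>J. \<Sum>q\<in>J. w p * w q * (N * (covariance (\<phi> p) (\<phi> q))\<^sup>2 +
      (real n - 1)\<^sup>2 * real n * (b p * b q * covariance (\<phi> p) (\<phi> q))))"
    by (simp add: power2_eq_square mult_ac)
  also have "\<dots> = \<kappa>\<^sup>2 * N * (\<Sum>p\<in>J. \<Sum>q\<in>J. w p * w q * (covariance (\<phi> p) (\<phi> q))\<^sup>2) +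
      \<kappa>\<^sup>2 * (real n - 1)\<^sup>2 * real n * (\<Sum>p\<in>J. \<Sum>q\<in>J. w p * b p * (w q * b q) * covariance (\<phi> p) (\<phi> q))"
    by (simp add: sum_distrib_left sum.distrib algebra_simps)
  finally show ?thesis
    unfolding \<kappa>_def N_def U_statistic_scaling[OF n] b_def .
qed

end

section \<open>Orthonormal families\<close>

definition bounded_orthonormal :: "'a measure \<Rightarrow> 'i set \<Rightarrow> ('i \<Rightarrow> 'a \<Rightarrow> real) \<Rightarrow> bool" where
  "bounded_orthonormal M J \<phi> \<longleftrightarrow> (\<forall>p\<in>J. ess_bounded M (\<phi> p)) \<and>
     (\<forall>p\<in>J. \<forall>q\<in>J. (\<integral>x. \<phi> p x * \<phi> q x \<partial>M) = (if p = q then 1 else 0))"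

lemma integral_square_sum_orthonormal:
  assumes "finite_measure M" "finite J" "bounded_orthonormal M J \<phi>"
  shows "(\<integral>x. (\<Sum>p\<in>J. z p * \<phi> p x)\<^sup>2 \<partial>M) = (\<Sum>p\<in>J. (z p)\<^sup>2)"
proof -
  have "(\<integral>x. (\<Sum>p\<in>J. z p * \<phi> p x)\<^sup>2 \<partial>M) = (\<Sum>p\<in>J. \<Sum>q\<in>J. \<integral>x. z p * \<phi> p x * (z q * \<phi> q x) \<partial>M)"
    unfolding power2_eq_square sum_product using assms(1,3) unfolding bounded_orthonormal_def
    by (intro integral_double_sum_ess_bounded ess_bounded_mult ess_bounded_const) auto
  also have "\<dots> = (\<Sum>p\<in>J. \<Sum>q\<in>J. if q = p then (z p)\<^sup>2 else 0)"
    using assms(3) unfolding bounded_orthonormal_def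
    by (intro sum.cong refl) (simp add: mult_ac power2_eq_square)
  finally show ?thesis using assms(2) by simp
qed

lemma bessel_inequality:
  assumes "finite_measure M" "finite J" "bounded_orthonormal M J \<phi>" "ess_bounded M h"
  shows "(\<Sum>p\<in>J. (\<integral>x. h x * \<phi> p x \<partial>M)\<^sup>2) \<le> (\<integral>x. (h x)\<^sup>2 \<partial>M)"
proof -
  define c where "c p = (\<integral>x. h x * \<phi> p x \<partial>M)" for p
  define S where "S x = (\<Sum>p\<in>J. c p * \<phi> p x)" for x
  have \<phi>: "ess_bounded M (\<phi> p)" if "p \<in> J" for p
    using assms(3) that unfolding bounded_orthonormal_def by blast
  have S: "ess_bounded M S"
    unfolding S_def[abs_def] using \<phi> by (intro ess_bounded_sum ess_bounded_mult ess_bounded_const)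
  have hS: "(\<integral>x. h x * S x \<partial>M) = (\<Sum>p\<in>J. (c p)\<^sup>2)"
  proof -
    have "(\<integral>x. h x * S x \<partial>M) = (\<Sum>p\<in>J. \<integral>x. c p * (h x * \<phi> p x) \<partial>M)"
      unfolding S_def sum_distrib_left using assms(1,4) \<phi>
      by (subst integral_sum_ess_bounded) (auto simp: mult_ac intro!: ess_bounded_mult)
    then show ?thesis by (simp add: c_def power2_eq_square)
  qed
  have "0 \<le> (\<integral>x. (h x - S x)\<^sup>2 \<partial>M)" by simp
  also have "\<dots> = (\<integral>x. (h x)\<^sup>2 \<partial>M) - 2 * (\<integral>x. h x * S x \<partial>M) + (\<integral>x. (S x)\<^sup>2 \<partial>M)"
  proof -
    have "integrable M (\<lambda>x. (h x)\<^sup>2)" "integrable M (\<lambda>x. h x * S x)" "integrable M (\<lambda>x. (S x)\<^sup>2)"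
      unfolding power2_eq_square using assms(1,4) S by (intro ess_bounded_integrable
          ess_bounded_mult; simp)+
    moreover have "(\<lambda>x. (h x - S x)\<^sup>2) = (\<lambda>x. (h x)\<^sup>2 - 2 * (h x * S x) + (S x)\<^sup>2)"
      by (simp add: fun_eq_iff power2_diff algebra_simps)
    ultimately show ?thesis
      by (simp add: Bochner_Integration.integral_add Bochner_Integration.integral_diff)
  qed
  also have "(\<integral>x. (S x)\<^sup>2 \<partial>M) = (\<Sum>p\<in>J. (c p)\<^sup>2)"
    unfolding S_def using assms(1-3) by (rule integral_square_sum_orthonormal)
  finally show ?thesis using hS by (simp add: c_def)
qed

section \<open>Bounded densities on the torus\<close>

lemma torus_set_sets [measurable]: "torus_set \<in> sets (lborel :: (real ^ 'd) measure)"
proof -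
  have "torus_set = (\<Inter>i. {x :: real ^ 'd. 0 \<le> x $ i} \<inter> {x. x $ i < 1})"
    unfolding torus_set_def by auto
  also have "\<dots> \<in> sets lborel"
    by (intro sets.countable_INT' countable_finite) auto
  finally show ?thesis .
qed

lemma space_torus: "space (torus :: (real ^ 'd) measure) = torus_set"
  by (simp add: torus_def space_restrict_space)

lemma finite_measure_torus: "finite_measure (torus :: (real ^ 'd) measure)"
proof
  have "bounded (torus_set :: (real ^ 'd) set)"
    unfolding bounded_iff
  proof (intro exI ballI)
    fix x :: "real ^ 'd" assume "x \<in> torus_set"
    then have "\<bar>x $ i\<bar> \<le> 1" for i
      unfolding torus_set_def by (simp add: abs_le_iff) (meson less_le_not_le order.trans zero_le_one)
    then show "norm x \<le> real CARD('d)"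
      using norm_le_l1_cart[of x] sum_mono[of UNIV "\<lambda>i. \<bar>x $ i\<bar>" "\<lambda>_. 1"] by simp
  qed
  then have "emeasure lborel (torus_set :: (real ^ 'd) set) < \<infinity>"
    by (rule emeasure_bounded_finite)
  moreover have "emeasure (torus :: (real ^ 'd) measure) (space torus) =
      emeasure lborel (torus_set :: (real ^ 'd) set)"
    unfolding space_torus unfolding torus_def by (rule emeasure_restrict_space) (use
        torus_set_sets in auto)
  ultimately show "emeasure (torus :: (real ^ 'd) measure) (space torus) \<noteq> \<infinity>"
    by simp
qed

locale bounded_density =
  fixes f :: "real ^ 'd \<Rightarrow> real"
  assumes f_measurable [measurable]: "f \<in> borel_measurable torus"
    and f_nonneg: "AE x in torus. 0 \<le> f x"
    and f_integral: "(LINT x|torus. f x) = 1"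
    and f_esssup: "esssup torus (\<lambda>x. ereal \<bar>f x\<bar>) < \<infinity>"
begin

lemma AE_le_Linf_norm: "AE x in torus. \<bar>f x\<bar> \<le> Linf_norm f"
  using esssup_AE[of "\<lambda>x. ereal \<bar>f x\<bar>" torus]
proof eventually_elim
  case (elim x)
  then show ?case
    using f_esssup unfolding Linf_norm_def by (cases "esssup torus (\<lambda>x. ereal \<bar>f x\<bar>)") auto
qed

lemma Linf_norm_nonneg: "0 \<le> Linf_norm f"
proof (rule ccontr)
  assume neg: "\<not> 0 \<le> Linf_norm f"
  have "AE x in torus. f x = 0"
    using AE_le_Linf_norm by eventually_elim (use neg in auto)
  then have "(LINT x|torus. f x) = 0" by (rule integral_eq_zero_AE)
  with f_integral show False by simp
qed

lemma ess_bounded_f: "ess_bounded torus f"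
  unfolding ess_bounded_def using AE_le_Linf_norm by auto

lemma integral_mult_le_Linf_norm:
  assumes "ess_bounded torus h" "AE x in torus. 0 \<le> h x"
  shows "(LINT x|torus. f x * h x) \<le> Linf_norm f * (LINT x|torus. h x)"
proof -
  have "(LINT x|torus. f x * h x) \<le> (LINT x|torus. Linf_norm f * h x)"
  proof (rule integral_mono_AE)
    show "integrable torus (\<lambda>x. f x * h x)" "integrable torus (\<lambda>x. Linf_norm f * h x)"
      using ess_bounded_f assms(1)
      by (intro ess_bounded_integrable finite_measure_torus ess_bounded_mult ess_bounded_const;
          simp)+
    show "AE x in torus. f x * h x \<le> Linf_norm f * h x"
      using AE_le_Linf_norm assms(2) by eventually_elim (simp add: mult_right_mono)
  qed
  then show ?thesis by simp
qed

text \<open>\<open>D\<close> is the law of a single observation \<open>X\<^sub>i\<close>.\<close>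

sublocale D: prob_space "density torus (\<lambda>x. ennreal (f x))"
proof
  have "emeasure (density torus (\<lambda>x. ennreal (f x))) (space torus) = (\<integral>\<^sup>+ x. ennreal (f x) \<partial>torus)"
    by (subst emeasure_density) (auto intro!: nn_integral_cong)
  also have "\<dots> = ennreal (LINT x|torus. f x)"
    using ess_bounded_integrable[OF finite_measure_torus ess_bounded_f] f_nonneg
    by (rule nn_integral_eq_integral)
  finally show "emeasure (density torus (\<lambda>x. ennreal (f x))) (space (density torus (\<lambda>x. ennreal (f x)))) = 1"
    by (simp add: f_integral)
qed

lemma ess_bounded_D: "ess_bounded torus h \<Longrightarrow> ess_bounded (density torus (\<lambda>x. ennreal (f x))) h"
  by (rule ess_bounded_density) measurable

lemma expectation_D: "ess_bounded torus h \<Longrightarrow> D.expectation h = (LINT x|torus. f x * h x)"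
  unfolding ess_bounded_def by (simp add: integral_density f_nonneg)
lemma expectation_D_minus_inner_T:
  assumes h: "ess_bounded torus h" and g: "integrable torus g"
  shows "D.expectation h - inner_T h g = inner_T (\<lambda>x. f x - g x) h"
proof -
  have "integrable torus (\<lambda>x. f x * h x)"
    by (intro ess_bounded_integrable[OF finite_measure_torus] ess_bounded_mult ess_bounded_f h)
  moreover have "integrable torus (\<lambda>x. h x * g x)"
    by (rule integrable_ess_bounded_mult[OF h g])
  ultimately show ?thesis
    unfolding inner_T_def expectation_D[OF h]
    by (simp add: left_diff_distrib mult.commute[of "g _"] Bochner_Integration.integral_diff)
qed

context
  fixes J :: "'i set" and \<phi> :: "'i \<Rightarrow> real ^ 'd \<Rightarrow> real"
  assumes J: "finite J" and \<phi>: "bounded_orthonormal torus J \<phi>"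
begin

lemma ess_bounded_orthonormal: "p \<in> J \<Longrightarrow> ess_bounded torus (\<phi> p)"
  using \<phi> unfolding bounded_orthonormal_def by blast

lemma covariance_form_le:
  "(\<Sum>p\<in>J. \<Sum>q\<in>J. z p * z q * D.covariance (\<phi> p) (\<phi> q)) \<le> Linf_norm f * (\<Sum>p\<in>J. (z p)\<^sup>2)"
proof -
  define Y where "Y = (\<lambda>x. \<Sum>p\<in>J. z p * \<phi> p x)"
  have Y: "ess_bounded torus Y"
    unfolding Y_def
    by (intro ess_bounded_sum ess_bounded_mult ess_bounded_const ess_bounded_orthonormal) simp
  have Y2: "ess_bounded torus (\<lambda>x. (Y x)\<^sup>2)"
    unfolding power2_eq_square by (rule ess_bounded_mult[OF Y Y])
  have "(\<Sum>p\<in>J. \<Sum>q\<in>J. z p * z q * D.covariance (\<phi> p) (\<phi> q)) = D.variance Y"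
    unfolding Y_def using J ess_bounded_orthonormal ess_bounded_D
    by (intro D.covariance_quadratic_form) auto
  also have "\<dots> \<le> D.expectation (\<lambda>x. (Y x)\<^sup>2)"
    using ess_bounded_D[OF Y] ess_bounded_D[OF Y2]
    by (simp add: D.variance_eq ess_bounded_integrable D.finite_measure_axioms)
  also have "\<dots> \<le> Linf_norm f * (LINT x|torus. (Y x)\<^sup>2)"
    unfolding expectation_D[OF Y2] using Y2 by (intro integral_mult_le_Linf_norm) auto
  also have "(LINT x|torus. (Y x)\<^sup>2) = (\<Sum>p\<in>J. (z p)\<^sup>2)"
    unfolding Y_def using finite_measure_torus J \<phi> by (rule integral_square_sum_orthonormal)
  finally show ?thesis .
qed

lemma sum_covariance_square_le:
  assumes p: "p \<in> J"
  shows "(\<Sum>q\<in>J. (D.covariance (\<phi> p) (\<phi> q))\<^sup>2) \<le> (Linf_norm f)\<^sup>2"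
proof -
  define u where "u x = \<phi> p x - D.expectation (\<phi> p)" for x
  have u: "ess_bounded torus u"
    unfolding u_def[abs_def] using ess_bounded_orthonormal[OF p]
    by (intro ess_bounded_diff ess_bounded_const)
  have fu: "ess_bounded torus (\<lambda>x. f x * u x)"
    using ess_bounded_f u by (rule ess_bounded_mult)
  have u_mean: "D.expectation u = 0"
    using ess_bounded_integrable[OF D.finite_measure_axioms ess_bounded_D[OF ess_bounded_orthonormal[OF p]]]
    by (simp add: u_def[abs_def] D.prob_space[simplified])
  \<comment> \<open>Bessel's inequality for \<open>f * u\<close>: its coefficients are the covariances, as \<open>u\<close> is centred.\<close>
  have cov: "(LINT x|torus. f x * u x * \<phi> q x) = D.covariance (\<phi> p) (\<phi> q)" if q: "q \<in> J" for q
  proof -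
    have uq: "ess_bounded torus (\<lambda>x. u x * \<phi> q x)"
      using u ess_bounded_orthonormal[OF q] by (rule ess_bounded_mult)
    have "D.covariance (\<phi> p) (\<phi> q) = D.expectation (\<lambda>x. u x * \<phi> q x) - D.expectation (\<phi> q) * D.expectation u"
      unfolding D.covariance_def u_def[symmetric] using ess_bounded_D[OF uq] ess_bounded_D[OF u]
      by (simp add: right_diff_distrib ess_bounded_integrable D.finite_measure_axioms mult.commute)
    then show ?thesis
      using u_mean by (simp add: expectation_D[OF uq] mult.assoc)
  qed
  have "(\<Sum>q\<in>J. (D.covariance (\<phi> p) (\<phi> q))\<^sup>2) \<le> (LINT x|torus. (f x * u x)\<^sup>2)"
    using bessel_inequality[OF finite_measure_torus J \<phi> fu] by (simp add: cov)
  also have "\<dots> = (LINT x|torus. f x * (f x * (u x)\<^sup>2))"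
    by (simp add: power2_eq_square mult_ac)
  also have "\<dots> \<le> Linf_norm f * (LINT x|torus. f x * (u x)\<^sup>2)"
    using ess_bounded_f u f_nonneg
    by (intro integral_mult_le_Linf_norm) (auto simp: power2_eq_square intro!: ess_bounded_mult)
  also have "(LINT x|torus. f x * (u x)\<^sup>2) = D.covariance (\<phi> p) (\<phi> p)"
    using u unfolding D.covariance_def u_def[symmetric]
    by (simp add: expectation_D power2_eq_square ess_bounded_mult)
  also have "\<dots> \<le> Linf_norm f"
    using covariance_form_le[of "\<lambda>q. if q = p then 1 else 0"] p J
    by (simp add: if_distrib if_distribR sum.If_cases)
  finally show ?thesis
    using Linf_norm_nonneg by (simp add: power2_eq_square mult_left_mono)
qed

end

end

section \<open>Wavelet coefficients and level weights\<close>

definition wavelet_index :: "'d itself \<Rightarrow> nat \<Rightarrow> (nat \<times> nat) set" where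
  "wavelet_index d j = (SIGMA l:{..<j}. {..<nwav d l})"

definition level_weight :: "real \<Rightarrow> nat \<Rightarrow> real" where
  "level_weight \<delta> l = 2 powr (- 2 * real l) * real (max l 1) powr (2 * \<delta>)"

lemma finite_wavelet_index [simp]: "finite (wavelet_index d j)"
  unfolding wavelet_index_def by simp

lemma sum_wavelet_index: "(\<Sum>l<j. \<Sum>k<nwav d l. F l k) = (\<Sum>p\<in>wavelet_index d j. F (fst p) (snd p))"
  unfolding wavelet_index_def by (simp add: sum.Sigma case_prod_beta)
context
  fixes psi :: "nat \<Rightarrow> nat \<Rightarrow> real ^ 'd \<Rightarrow> real"
  assumes basis: "wavelet_ONB psi"
begin

lemma ess_bounded_wavelet: "k < nwav TYPE('d) l \<Longrightarrow> ess_bounded torus (psi l k)"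
proof -
  assume k: "k < nwav TYPE('d) l"
  then obtain B where "psi l k \<in> borel_measurable torus" "\<forall>x\<in>torus_set. \<bar>psi l k x\<bar> \<le> B"
    using basis unfolding wavelet_ONB_def by blast
  moreover from this(2) have "AE x in torus. \<bar>psi l k x\<bar> \<le> B"
    by (intro AE_I2) (simp add: space_torus)
  ultimately show ?thesis
    unfolding ess_bounded_def by blast
qed

lemma wavelet_orthonormal:
  "bounded_orthonormal torus (wavelet_index TYPE('d) j) (\<lambda>p. psi (fst p) (snd p))"
  using basis ess_bounded_wavelet
  unfolding bounded_orthonormal_def wavelet_ONB_def wavelet_index_def inner_T_def
  by (auto simp: prod_eq_iff)

lemma inner_T_Kproj_wavelet:
  assumes k: "k < nwav TYPE('d) l"
  shows "inner_T (Kproj psi j h) (psi l k) = (if l < j then inner_T h (psi l k) else 0)"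
proof -
  let ?J = "wavelet_index TYPE('d) j"
  define c where "c = inner_T h (\<lambda>_. 1)"
  define a where "a p = inner_T h (psi (fst p) (snd p))" for p
  have \<psi>: "ess_bounded torus (psi (fst p) (snd p))" if "p \<in> ?J" for p
    using that ess_bounded_wavelet unfolding wavelet_index_def by auto
  have \<psi>lk: "ess_bounded torus (psi l k)" by (rule ess_bounded_wavelet[OF k])
  have mean: "(LINT x|torus. psi l k x) = 0"
    using basis k unfolding wavelet_ONB_def inner_T_def by simp
  have orth: "(LINT x|torus. psi (fst p) (snd p) x * psi l k x) = (if p = (l, k) then 1 else 0)"
    if "p \<in> ?J" for p
    using basis k that unfolding wavelet_ONB_def wavelet_index_def inner_T_def by (auto simp:
        prod_eq_iff)
  have "Kproj psi j h = (\<lambda>x. c + (\<Sum>p\<in>?J. a p * psi (fst p) (snd p) x))"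
    unfolding Kproj_def c_def a_def by (simp add: sum_wavelet_index)
  then have "inner_T (Kproj psi j h) (psi l k) =
      (LINT x|torus. c * psi l k x + (\<Sum>p\<in>?J. a p * (psi (fst p) (snd p) x * psi l k x)))"
    unfolding inner_T_def by (simp add: algebra_simps sum_distrib_left)
  also have "\<dots> = c * (LINT x|torus. psi l k x) +
      (\<Sum>p\<in>?J. a p * (LINT x|torus. psi (fst p) (snd p) x * psi l k x))"
    using \<psi> \<psi>lk
    by (simp add: Bochner_Integration.integral_add ess_bounded_integrable finite_measure_torus
        integral_sum_ess_bounded ess_bounded_mult ess_bounded_sum)
  also have "\<dots> = (\<Sum>p\<in>?J. if p = (l, k) then a p else 0)"
    unfolding mean mult_zero_right add_0 by (intro sum.cong refl) (simp add: orth)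
  also have "\<dots> = (if l < j then inner_T h (psi l k) else 0)"
    using k by (simp add: a_def wavelet_index_def)
  finally show ?thesis .
qed

lemma Hnorm_Kproj_ge:
  "(\<Sum>p\<in>wavelet_index TYPE('d) j. level_weight \<delta> (fst p) * (inner_T h (psi (fst p) (snd p)))\<^sup>2)
    \<le> (Hnorm psi \<delta> (Kproj psi j h))\<^sup>2"
proof -
  define t where "t l = level_weight \<delta> l * (\<Sum>k<nwav TYPE('d) l. (inner_T (Kproj psi j h) (psi l k))\<^sup>2)" for l
  have "t l = 0" if "l \<notin> {..<j}" for l
    using that unfolding t_def by (simp add: inner_T_Kproj_wavelet)
  then have "suminf t = (\<Sum>l<j. t l)"
    by (intro suminf_finite) auto
  also have "\<dots> = (\<Sum>p\<in>wavelet_index TYPE('d) j.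
      level_weight \<delta> (fst p) * (inner_T (Kproj psi j h) (psi (fst p) (snd p)))\<^sup>2)"
    unfolding t_def sum_distrib_left by (rule sum_wavelet_index)
  also have "\<dots> = (\<Sum>p\<in>wavelet_index TYPE('d) j. level_weight \<delta> (fst p) * (inner_T h (psi (fst p) (snd p)))\<^sup>2)"
    by (intro sum.cong refl) (auto simp: wavelet_index_def inner_T_Kproj_wavelet)
  finally have t: "suminf t = \<dots>" .
  have "0 \<le> suminf t"
    unfolding t level_weight_def by (intro sum_nonneg) auto
  moreover have "sqrt (suminf t) \<le> Hnorm psi \<delta> (Kproj psi j h)"
    unfolding Hnorm_def t_def level_weight_def by simp
  ultimately show ?thesis
    unfolding t[symmetric] by (metis real_sqrt_ge_zero real_sqrt_pow2 power_mono)
qed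

end

lemma four_powr_decay_tendsto_zero:
  fixes e :: real
  assumes "0 \<le> e"
  shows "(\<lambda>m::nat. 4 powr (- real m) * real m powr e) \<longlonglongrightarrow> 0"
  using assms by real_asymp

lemma bdd_above_level_weight:
  "bdd_above ((\<lambda>l::int. 4 powr (- real_of_int l) * real_of_int (max 1 l) powr (2 * \<delta>)) ` {l. l \<ge> -1})"
proof -
  define e where "e = max 0 (2 * \<delta>)"
  have "(\<lambda>m::nat. 4 powr (- real m) * real m powr e) \<longlonglongrightarrow> 0"
    by (rule four_powr_decay_tendsto_zero) (simp add: e_def)
  then have "Bseq (\<lambda>m::nat. 4 powr (- real m) * real m powr e)"
    by (rule convergent_imp_Bseq[OF convergentI])
  then obtain K where K: "\<And>m. norm (4 powr (- real m) * real m powr e) \<le> K"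
    unfolding Bseq_def by blast
  have "4 powr (- real_of_int l) * real_of_int (max 1 l) powr (2 * \<delta>) \<le> max 4 K" if "l \<ge> -1" for l :: int
  proof (cases "l \<le> 0")
    case True
    with that have "l = -1 \<or> l = 0" by auto
    then show ?thesis by auto
  next
    case False
    then obtain m :: nat where m: "l = int m" "m \<ge> 1"
      using pos_int_cases[of l] by (metis int_one_le_iff_zero_less not_le of_nat_le_iff of_nat_1)
    have "4 powr (- real_of_int l) * real_of_int (max 1 l) powr (2 * \<delta>) = 4 powr (- real m) * real m powr (2 * \<delta>)"
      using m by simp
    also have "\<dots> \<le> 4 powr (- real m) * real m powr e"
      using m by (intro mult_left_mono powr_mono) (auto simp: e_def)
    also have "\<dots> \<le> K" using K[of m] by simp
    finally show ?thesis by simp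
  qed
  then show ?thesis unfolding bdd_above_def by blast
qed

lemma level_weight_le_SUP:
  "level_weight \<delta> l \<le> (SUP m\<in>{m::int. m \<ge> -1}. 4 powr (- real_of_int m) * real_of_int (max 1 m) powr (2 * \<delta>))"
proof -
  have "(2::real) powr (2 * - real l) = (2 powr 2) powr (- real l)"
    by (rule powr_powr[symmetric])
  then have "level_weight \<delta> l = 4 powr (- real_of_int (int l)) * real_of_int (max 1 (int l)) powr (2 * \<delta>)"
    unfolding level_weight_def by (simp add: powr_numeral max_def)
  also have "\<dots> \<le> (SUP m\<in>{m::int. m \<ge> -1}. 4 powr (- real_of_int m) * real_of_int (max 1 m) powr (2 * \<delta>))"
    by (rule cSUP_upper[OF _ bdd_above_level_weight]) simp
  finally show ?thesis .
qed

lemma SUP_level_weight_nonneg: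
  "0 \<le> (SUP m\<in>{m::int. m \<ge> -1}. 4 powr (- real_of_int m) * real_of_int (max 1 m) powr (2 * \<delta>))"
  using level_weight_le_SUP[of \<delta> 0] by (simp add: level_weight_def)

lemma sum_level_weight_square:
  "(\<Sum>p\<in>wavelet_index TYPE('d) j. (level_weight \<delta> (fst p))\<^sup>2) =
    (\<Sum>l<j. 2 powr (real l * (real CARD('d) - 4)) * real (max l 1) powr (4 * \<delta>))"
proof -
  have "real (nwav TYPE('d) l) * (level_weight \<delta> l)\<^sup>2 =
      2 powr (real l * (real CARD('d) - 4)) * real (max l 1) powr (4 * \<delta>)" for l
  proof -
    have "real (nwav TYPE('d) l) = 2 powr (real l * real CARD('d))"
      unfolding nwav_def by (simp add: powr_realpow[symmetric])
    then show ?thesis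
      unfolding level_weight_def power_mult_distrib
      by (simp add: power2_eq_square powr_add[symmetric] algebra_simps)
  qed
  moreover have "(\<Sum>p\<in>wavelet_index TYPE('d) j. (level_weight \<delta> (fst p))\<^sup>2) =
      (\<Sum>l<j. \<Sum>k<nwav TYPE('d) l. (level_weight \<delta> l)\<^sup>2)"
    by (rule sum_wavelet_index[symmetric])
  ultimately show ?thesis by simp
qed

context bounded_density
begin

context
  fixes psi :: "nat \<Rightarrow> nat \<Rightarrow> real ^ 'd \<Rightarrow> real"
  assumes basis: "wavelet_ONB psi"
begin

lemma variance_Ustat:
  assumes n: "2 \<le> n"
  shows "(LINT xs|sample_law f n. (Ustat psi \<delta> n j g xs - (LINT ys|sample_law f n. Ustat psi \<delta> n j g ys))\<^sup>2) =
    2 / (real n * (real n - 1)) * (\<Sum>p\<in>wavelet_index TYPE('d) j. \<Sum>q\<in>wavelet_index TYPE('d) j.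
      level_weight \<delta> (fst p) * level_weight \<delta> (fst q) *
      (D.covariance (psi (fst p) (snd p)) (psi (fst q) (snd q)))\<^sup>2) +
    4 / real n * (\<Sum>p\<in>wavelet_index TYPE('d) j. \<Sum>q\<in>wavelet_index TYPE('d) j.
      level_weight \<delta> (fst p) * (D.expectation (psi (fst p) (snd p)) - inner_T (psi (fst p) (snd
          p)) g) *
      (level_weight \<delta> (fst q) * (D.expectation (psi (fst q) (snd q)) - inner_T (psi (fst q) (snd
          q)) g)) *
      D.covariance (psi (fst p) (snd p)) (psi (fst q) (snd q)))"
proof -
  have U: "Ustat psi \<delta> n j g = (\<lambda>xs. 2 / (real n * (real n - 1)) *
      (\<Sum>i'<n. \<Sum>i<i'. \<Sum>p\<in>wavelet_index TYPE('d) j. level_weight \<delta> (fst p) *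
        ((psi (fst p) (snd p) (xs i) - inner_T (psi (fst p) (snd p)) g) *
         (psi (fst p) (snd p) (xs i') - inner_T (psi (fst p) (snd p)) g))))"
    by (simp add: fun_eq_iff Ustat_def level_weight_def sum_distrib_left sum_wavelet_index)
  have "ess_bounded (density torus (\<lambda>x. ennreal (f x))) (psi (fst p) (snd p))"
    if "p \<in> wavelet_index TYPE('d) j" for p
    using that ess_bounded_wavelet[OF basis] by (auto simp: wavelet_index_def intro!: ess_bounded_D)
  from D.variance_weighted_U_statistic[OF finite_wavelet_index this n,
      where w = "\<lambda>p. level_weight \<delta> (fst p)" and c = "\<lambda>p. inner_T (psi (fst p) (snd p)) g"]
  show ?thesis
    unfolding sample_law_def U by simp
qed

lemma weighted_covariance_square_le:
  "(\<Sum>p\<in>wavelet_index TYPE('d) j. \<Sum>q\<in>wavelet_index TYPE('d) j.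
      level_weight \<delta> (fst p) * level_weight \<delta> (fst q) *
      (D.covariance (psi (fst p) (snd p)) (psi (fst q) (snd q)))\<^sup>2)
    \<le> (Linf_norm f)\<^sup>2 * (\<Sum>l<j. 2 powr (real l * (real CARD('d) - 4)) * real (max l 1) powr (4 * \<delta>))"
proof -
  have "(\<Sum>p\<in>wavelet_index TYPE('d) j. \<Sum>q\<in>wavelet_index TYPE('d) j.
      level_weight \<delta> (fst p) * level_weight \<delta> (fst q) *
      (D.covariance (psi (fst p) (snd p)) (psi (fst q) (snd q)))\<^sup>2)
    \<le> (Linf_norm f)\<^sup>2 * (\<Sum>p\<in>wavelet_index TYPE('d) j. (level_weight \<delta> (fst p))\<^sup>2)"
    by (rule sum_weighted_square_le[OF D.covariance_commute
        sum_covariance_square_le[OF finite_wavelet_index wavelet_orthonormal[OF basis]]])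
  then show ?thesis by (simp only: sum_level_weight_square)
qed

lemma weighted_covariance_form_le:
  assumes g: "integrable torus g"
  shows "(\<Sum>p\<in>wavelet_index TYPE('d) j. \<Sum>q\<in>wavelet_index TYPE('d) j.
      level_weight \<delta> (fst p) * (D.expectation (psi (fst p) (snd p)) - inner_T (psi (fst p) (snd
          p)) g) *
      (level_weight \<delta> (fst q) * (D.expectation (psi (fst q) (snd q)) - inner_T (psi (fst q) (snd
          q)) g)) *
      D.covariance (psi (fst p) (snd p)) (psi (fst q) (snd q)))
    \<le> Linf_norm f * (SUP m\<in>{m::int. m \<ge> -1}. 4 powr (- real_of_int m) * real_of_int (max 1 m) powr
        (2 * \<delta>)) *
      (Hnorm psi \<delta> (Kproj psi j (\<lambda>x. f x - g x)))\<^sup>2"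
proof -
  let ?S = "SUP m\<in>{m::int. m \<ge> -1}. 4 powr (- real_of_int m) * real_of_int (max 1 m) powr (2 * \<delta>)"
  define w where "w p = level_weight \<delta> (fst p)" for p :: "nat \<times> nat"
  define b where "b p = inner_T (\<lambda>x. f x - g x) (psi (fst p) (snd p))" for p
  have b: "D.expectation (psi (fst p) (snd p)) - inner_T (psi (fst p) (snd p)) g = b p"
    if "p \<in> wavelet_index TYPE('d) j" for p
    unfolding b_def using that ess_bounded_wavelet[OF basis] g
    by (intro expectation_D_minus_inner_T) (auto simp: wavelet_index_def)
  have "(\<Sum>p\<in>wavelet_index TYPE('d) j. \<Sum>q\<in>wavelet_index TYPE('d) j.
      w p * b p * (w q * b q) * D.covariance (psi (fst p) (snd p)) (psi (fst q) (snd q)))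
      \<le> Linf_norm f * (\<Sum>p\<in>wavelet_index TYPE('d) j. (w p * b p)\<^sup>2)"
    by (rule covariance_form_le[OF finite_wavelet_index wavelet_orthonormal[OF basis]])
  also have "\<dots> \<le> Linf_norm f * (?S * (\<Sum>p\<in>wavelet_index TYPE('d) j. w p * (b p)\<^sup>2))"
  proof (intro mult_left_mono Linf_norm_nonneg)
    have "(w p * b p)\<^sup>2 \<le> ?S * (w p * (b p)\<^sup>2)" for p
    proof -
      have "(w p * b p)\<^sup>2 = w p * (w p * (b p)\<^sup>2)"
        by (simp add: power2_eq_square)
      also have "\<dots> \<le> ?S * (w p * (b p)\<^sup>2)"
        using level_weight_le_SUP[of \<delta> "fst p"]
        by (intro mult_right_mono) (auto simp: w_def level_weight_def)
      finally show ?thesis .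
    qed
    then show "(\<Sum>p\<in>wavelet_index TYPE('d) j. (w p * b p)\<^sup>2) \<le>
        ?S * (\<Sum>p\<in>wavelet_index TYPE('d) j. w p * (b p)\<^sup>2)"
      by (simp add: sum_distrib_left sum_mono)
  qed
  also have "\<dots> \<le> Linf_norm f * (?S * (Hnorm psi \<delta> (Kproj psi j (\<lambda>x. f x - g x)))\<^sup>2)"
    unfolding w_def b_def
    by (intro mult_left_mono Linf_norm_nonneg SUP_level_weight_nonneg Hnorm_Kproj_ge[OF basis])
  finally show ?thesis
    by (simp add: w_def b mult.assoc cong: sum.cong)
qed

end

end

theorem mainTheorem4:
  fixes f g :: "real ^ 'd \<Rightarrow> real"
    and psi :: "nat \<Rightarrow> nat \<Rightarrow> real ^ 'd \<Rightarrow> real"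
    and n j :: nat and \<delta> :: real
  assumes basis: "wavelet_ONB psi"
    and f_meas: "f \<in> borel_measurable torus"
    and f_nonneg: "AE x in torus. 0 \<le> f x"
    and f_dens: "(LINT x|torus. f x) = 1"
    and f_Linf: "esssup torus (\<lambda>x. ereal \<bar>f x\<bar>) < \<infinity>"
    and g_int: "integrable torus g"
  shows "(LINT xs|sample_law f n.
            (Ustat psi \<delta> n j g xs - (LINT ys|sample_law f n. Ustat psi \<delta> n j g ys))\<^sup>2)
         \<le> 4 * Linf_norm f / real n *
             (SUP l\<in>{l::int. l \<ge> -1}. 4 powr (- real_of_int l) * real_of_int (max 1 l) powr (2 * \<delta>)) *
             (Hnorm psi \<delta> (Kproj psi j (\<lambda>x. f x - g x)))\<^sup>2
           + 2 * (Linf_norm f)\<^sup>2 / (real n * (real n - 1)) *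
             (\<Sum>l<j. 2 powr (real l * (real CARD('d) - 4)) * real (max l 1) powr (4 * \<delta>))"
proof -
  interpret bounded_density f
    using f_meas f_nonneg f_dens f_Linf by unfold_locales
  let ?V = "LINT xs|sample_law f n.
    (Ustat psi \<delta> n j g xs - (LINT ys|sample_law f n. Ustat psi \<delta> n j g ys))\<^sup>2"
  let ?S = "SUP l\<in>{l::int. l \<ge> -1}. 4 powr (- real_of_int l) * real_of_int (max 1 l) powr (2 * \<delta>)"
  let ?H = "(Hnorm psi \<delta> (Kproj psi j (\<lambda>x. f x - g x)))\<^sup>2"
  let ?B = "\<Sum>l<j. 2 powr (real l * (real CARD('d) - 4)) * real (max l 1) powr (4 * \<delta>)"
  show ?thesis
  proof (cases "2 \<le> n")
    case True
    then have "0 \<le> 2 / (real n * (real n - 1))" by simp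
    then have "?V \<le> 2 / (real n * (real n - 1)) * ((Linf_norm f)\<^sup>2 * ?B) +
        4 / real n * (Linf_norm f * ?S * ?H)"
      unfolding variance_Ustat[OF basis True]
      by (intro add_mono mult_left_mono weighted_covariance_square_le[OF basis]
          weighted_covariance_form_le[OF basis g_int]) auto
    then show ?thesis by (simp add: mult_ac)
  next
    case False
    \<comment> \<open>The U-statistic is an empty sum, and \<open>n (n - 1) = 0\<close> makes the second term vanish.\<close>
    then have n: "n = 0 \<or> n = 1" by auto
    then have "Ustat psi \<delta> n j g xs = 0" for xs
      by (auto simp: Ustat_def)
    moreover have "0 \<le> 4 * Linf_norm f / real n * ?S * ?H"
      using Linf_norm_nonneg SUP_level_weight_nonneg[of \<delta>] by simp
    ultimately show ?thesis
      using n by auto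
  qed
qed

end
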